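(* Let $Z$ and $V$ be real Banach spaces, where the norm of $Z$ is Fréchet differentiable away from zero. Let $D \subset Z$ be open, $r \in Z$, and let $F: D \to V$ be semismooth at $z \in D$, $z \neq r$, with Newton derivative $H_F$. Let $p \ge 1$ and $\sigma \ge 0$, and define $$M(z;r) = \left(\frac{1}{\|z-r\|_Z^p} + \sigma\right)\mathcal{I}_V,$$ where $\mathcal{I}_V$ is the identity on $V$. Then $G(z) = M(z;r)F(z)$ is also semismooth at $z$, with Newton derivative acting by $$H_G(z)h = \left(\sigma + \frac{1}{\|z-r\|_Z^p}\right)H_F(z)h - p\,\frac{\langle z^*, h\rangle_{Z^*,Z}}{\|z-r\|_Z^{p+1}}\,F(z),$$ where $z^* \in Z^*$ is the derivative of the norm $\|\cdot\|_Z$ at $z - r$, i.e.\ satisfies $\|z^*\|_{Z^*} \le 1$ and $\langle z^*, z-r\rangle_{Z^*,Z} = \|z-r\|_Z$.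
   Context: Semismoothness: $F: D \subset Z \to V$ ($D$ open) is semismooth at $z \in D$ if it is locally Lipschitz continuous at $z$ and there exist an open neighbourhood $N \subset D$ containing $z$ and a mapping $H: D \to L(Z,V)$ (a Newton derivative) such that $F(w+h) - F(w) - H(w+h)h = o(\|h\|_Z)$ as $h \to 0$, for all $w \in N$. The paper assumes throughout that the norm on $Z$ is Fréchet differentiable away from zero. *)

theory Defs
  imports "HOL-Analysis.Analysis"
begin

definition locally_lipschitz_at :: "'a::real_normed_vector set \<Rightarrow> ('a \<Rightarrow> 'b::real_normed_vector) \<Rightarrow> 'a \<Rightarrow> bool" where
  "locally_lipschitz_at D F z \<longleftrightarrow>
     (\<exists>U L. open U \<and> z \<in> U \<and> U \<subseteq> D \<and>
        (\<forall>x\<in>U. \<forall>y\<in>U. norm (F x - F y) \<le> L * norm (x - y)))"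

definition semismooth_with :: "'a::real_normed_vector set \<Rightarrow> ('a \<Rightarrow> 'b::real_normed_vector) \<Rightarrow> ('a \<Rightarrow> 'a \<Rightarrow> 'b) \<Rightarrow> 'a \<Rightarrow> bool" where
  "semismooth_with D F H z \<longleftrightarrow>
     z \<in> D \<and> locally_lipschitz_at D F z \<and>
     (\<forall>w\<in>D. bounded_linear (H w)) \<and>
     (\<exists>N. open N \<and> z \<in> N \<and> N \<subseteq> D \<and>
        (\<forall>w\<in>N. ((\<lambda>h. norm (F (w + h) - F w - H (w + h) h) / norm h) \<longlongrightarrow> 0) (at 0)))"

end

theory Submission
  imports Defs
begin

text \<open>The map is \<open>G = m F\<close> with \<open>m w = \<parallel>w - r\<parallel>\<^sup>-\<^sup>p + \<sigma>\<close>. Because the norm is convex, its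
  Frechet derivative at \<open>w + h\<close> is a subgradient there, and this makes the norm semismooth away
  from \<open>0\<close> with its Frechet derivative as Newton derivative. A chain rule with the \<open>C\<^sup>1\<close> function
  \<open>t \<mapsto> t\<^sup>-\<^sup>p + \<sigma>\<close> on \<open>(0, \<infinity>)\<close> makes \<open>m\<close> semismooth near \<open>z\<close>, and a product rule for semismooth
  maps combines \<open>m\<close> with \<open>F\<close>; away from \<open>r\<close> the resulting Newton derivative is the stated one.\<close>

definition newton_differentiable_at ::
    "('a::real_normed_vector \<Rightarrow> 'b::real_normed_vector) \<Rightarrow> ('a \<Rightarrow> 'a \<Rightarrow> 'b) \<Rightarrow> 'a \<Rightarrow> bool" where
  "newton_differentiable_at F H w \<longleftrightarrow>
     ((\<lambda>h. norm (F (w + h) - F w - H (w + h) h) / norm h) \<longlongrightarrow> 0) (at 0)"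

lemma locally_lipschitz_at_iff_lipschitz_on:
  "locally_lipschitz_at D F z \<longleftrightarrow> (\<exists>U L. open U \<and> z \<in> U \<and> U \<subseteq> D \<and> L-lipschitz_on U F)"
proof
  assume "locally_lipschitz_at D F z"
  then obtain U L where U: "open U" "z \<in> U" "U \<subseteq> D"
    and lip: "\<forall>x\<in>U. \<forall>y\<in>U. norm (F x - F y) \<le> L * norm (x - y)"
    unfolding locally_lipschitz_at_def by blast
  have "(max L 0)-lipschitz_on U F"
  proof (rule lipschitz_onI)
    fix x y assume "x \<in> U" "y \<in> U"
    then have "norm (F x - F y) \<le> L * norm (x - y)" using lip by blast
    also have "\<dots> \<le> max L 0 * norm (x - y)" by (simp add: mult_right_mono)
    finally show "dist (F x) (F y) \<le> max L 0 * dist x y" by (simp add: dist_norm)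
  qed simp
  with U show "\<exists>U L. open U \<and> z \<in> U \<and> U \<subseteq> D \<and> L-lipschitz_on U F" by blast
next
  assume "\<exists>U L. open U \<and> z \<in> U \<and> U \<subseteq> D \<and> L-lipschitz_on U F"
  then show "locally_lipschitz_at D F z"
    unfolding locally_lipschitz_at_def by (blast dest: lipschitz_on_normD)
qed

lemma semismooth_with_iff:
  "semismooth_with D F H z \<longleftrightarrow>
     z \<in> D \<and> (\<exists>U L. open U \<and> z \<in> U \<and> U \<subseteq> D \<and> L-lipschitz_on U F) \<and>
     (\<forall>w\<in>D. bounded_linear (H w)) \<and>
     (\<exists>N. open N \<and> z \<in> N \<and> N \<subseteq> D \<and> (\<forall>w\<in>N. newton_differentiable_at F H w))"
  unfolding semismooth_with_def locally_lipschitz_at_iff_lipschitz_on newton_differentiable_at_def ..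

lemma eventually_at_zero_add_in_open:
  fixes w :: "'a::real_normed_vector"
  assumes "open S" "w \<in> S"
  shows "eventually (\<lambda>h. w + h \<in> S) (at 0)"
proof -
  have "((\<lambda>h. w + h) \<longlongrightarrow> w) (at 0)"
    by (auto intro!: tendsto_eq_intros)
  then show ?thesis using assms by (rule topological_tendstoD)
qed

lemma lipschitz_on_eventually_at_zero:
  fixes f :: "'a::real_normed_vector \<Rightarrow> 'b::metric_space"
  assumes "C-lipschitz_on U f" "open U" "w \<in> U"
  shows "eventually (\<lambda>h. dist (f (w + h)) (f w) \<le> C * norm h) (at 0)"
  using eventually_at_zero_add_in_open[OF assms(2,3)]
  by eventually_elim (use assms in \<open>auto dest: lipschitz_onD simp: dist_norm\<close>)

lemma tendsto_at_zero_of_lipschitz_bound: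
  fixes f :: "'a::real_normed_vector \<Rightarrow> 'b::metric_space"
  assumes "eventually (\<lambda>h. dist (f (w + h)) (f w) \<le> C * norm h) (at 0)"
  shows "((\<lambda>h. f (w + h)) \<longlongrightarrow> f w) (at 0)"
proof (rule metric_tendsto_imp_tendsto)
  show "((\<lambda>h. C * norm h) \<longlongrightarrow> 0) (at 0)"
    by (auto intro!: tendsto_eq_intros)
  show "eventually (\<lambda>h. dist (f (w + h)) (f w) \<le> dist (C * norm h) 0) (at 0)"
    using assms by eventually_elim
      (simp add: abs_mult, meson abs_ge_self mult_right_mono norm_ge_zero order_trans)
qed

lemma newton_differentiable_at_cong:
  assumes "newton_differentiable_at F H w"
    and "eventually (\<lambda>h. H' (w + h) h = H (w + h) h) (at 0)"
  shows "newton_differentiable_at F H' w"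
proof -
  have "eventually (\<lambda>h. norm (F (w + h) - F w - H (w + h) h) / norm h
      = norm (F (w + h) - F w - H' (w + h) h) / norm h) (at 0)"
    using assms(2) by eventually_elim simp
  with assms(1) show ?thesis
    unfolding newton_differentiable_at_def by (rule tendsto_cong[THEN iffD1, rotated])
qed

lemma norm_derivative_le_norm_diff:
  fixes x v :: "'a::real_normed_vector"
  assumes N: "(norm has_derivative N) (at x)"
  shows "N v \<le> norm (x + v) - norm x"
proof -
  have "convex_on UNIV (\<lambda>t::real. norm (x + t *\<^sub>R v))"
  proof (rule convex_onI)
    fix s t u :: real assume u: "0 < u" "u < 1"
    have "x + ((1 - u) * s + u * t) *\<^sub>R v = (1 - u) *\<^sub>R (x + s *\<^sub>R v) + u *\<^sub>R (x + t *\<^sub>R v)"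
      by (simp add: algebra_simps)
    then show "norm (x + ((1 - u) *\<^sub>R s + u *\<^sub>R t) *\<^sub>R v)
        \<le> (1 - u) * norm (x + s *\<^sub>R v) + u * norm (x + t *\<^sub>R v)"
      using u norm_triangle_ineq[of "(1 - u) *\<^sub>R (x + s *\<^sub>R v)" "u *\<^sub>R (x + t *\<^sub>R v)"] by simp
  qed auto
  moreover have "((\<lambda>t::real. norm (x + t *\<^sub>R v)) has_field_derivative N v) (at 0)"
  proof -
    have "((\<lambda>t::real. x + t *\<^sub>R v) has_derivative (\<lambda>t. t *\<^sub>R v)) (at 0)"
      by (auto intro!: derivative_eq_intros)
    from has_derivative_compose[OF this, of norm N] N
    have "((\<lambda>t::real. norm (x + t *\<^sub>R v)) has_derivative (\<lambda>t. N (t *\<^sub>R v))) (at 0)" by simp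
    moreover have "(\<lambda>t. N (t *\<^sub>R v)) = (*) (N v)"
      using linear_scale[OF has_derivative_linear[OF N]] by (auto simp: mult.commute)
    ultimately show ?thesis by (simp add: has_field_derivative_def)
  qed
  ultimately have "N v * (1 - 0) \<le> norm (x + 1 *\<^sub>R v) - norm (x + 0 *\<^sub>R v)"
    by (intro convex_on_imp_above_tangent[where A = UNIV]) auto
  then show ?thesis by simp
qed

text \<open>Convexity squeezes the remainder between zero and a second difference of the norm,
  which the Frechet derivative at \<open>y\<close> controls.\<close>

lemma norm_newton_remainder_le:
  fixes y h :: "'a::real_normed_vector"
  assumes N: "(norm has_derivative N) (at (y + h))" and L: "linear L"
  shows "\<bar>norm (y + h) - norm y - N h\<bar>
    \<le> 2 * \<bar>norm (y + h) - norm y - L h\<bar> + \<bar>norm (y + 2 *\<^sub>R h) - norm y - L (2 *\<^sub>R h)\<bar>"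
proof -
  have "N (- h) \<le> norm y - norm (y + h)"
    using norm_derivative_le_norm_diff[OF N, of "- h"] by simp
  then have upper: "norm (y + h) - norm y - N h \<le> 0"
    using linear_neg[OF has_derivative_linear[OF N]] by simp
  have "N h \<le> norm (y + 2 *\<^sub>R h) - norm (y + h)"
    using norm_derivative_le_norm_diff[OF N, of h] by (simp add: algebra_simps scaleR_2)
  then have lower: "2 * (norm (y + h) - norm y - L h) - (norm (y + 2 *\<^sub>R h) - norm y - L (2 *\<^sub>R h))
      \<le> norm (y + h) - norm y - N h"
    using linear_scale[OF L, of 2 h] by simp
  from upper lower show ?thesis by (smt (verit))
qed

lemma newton_differentiable_at_norm:
  fixes y :: "'a::real_normed_vector"
  assumes Nd: "\<And>x. x \<noteq> 0 \<Longrightarrow> (norm has_derivative Nd x) (at x)" and "y \<noteq> 0"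
  shows "newton_differentiable_at norm Nd y"
proof -
  define E where "E h = \<bar>norm (y + h) - norm y - Nd y h\<bar> / norm h" for h
  have E: "(E \<longlongrightarrow> 0) (at 0)"
    using Nd[OF \<open>y \<noteq> 0\<close>] unfolding has_derivative_at E_def by simp
  have "filterlim (\<lambda>h::'a. 2 *\<^sub>R h) (at 0) (at 0)"
    by (rule filterlim_atI) (auto intro!: tendsto_eq_intros simp: eventually_at_filter)
  with E have E2: "((\<lambda>h. E (2 *\<^sub>R h)) \<longlongrightarrow> 0) (at 0)"
    by (rule filterlim_compose)
  have linear: "linear (Nd y)"
    using Nd[OF \<open>y \<noteq> 0\<close>] by (rule has_derivative_linear)
  have "eventually (\<lambda>h. y + h \<in> - {0} \<and> h \<noteq> 0) (at 0)"
    using eventually_at_zero_add_in_open[of "- {0}" y] \<open>y \<noteq> 0\<close>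
    by (auto simp: eventually_conj_iff eventually_at_filter)
  then have "eventually (\<lambda>h. norm (norm (norm (y + h) - norm y - Nd (y + h) h) / norm h)
      \<le> 2 * E h + 2 * E (2 *\<^sub>R h)) (at 0)"
  proof eventually_elim
    case (elim h)
    then have "\<bar>norm (y + h) - norm y - Nd (y + h) h\<bar> / norm h
        \<le> (2 * \<bar>norm (y + h) - norm y - Nd y h\<bar>
           + \<bar>norm (y + 2 *\<^sub>R h) - norm y - Nd y (2 *\<^sub>R h)\<bar>) / norm h"
      using norm_newton_remainder_le[OF Nd linear] by (simp add: divide_right_mono)
    also have "\<dots> = 2 * E h + 2 * E (2 *\<^sub>R h)"
      using elim by (simp add: E_def field_simps)
    finally show ?case by simp
  qed
  moreover have "((\<lambda>h. 2 * E h + 2 * E (2 *\<^sub>R h)) \<longlongrightarrow> 0) (at 0)"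
    using tendsto_add[OF tendsto_mult_right_zero[OF E] tendsto_mult_right_zero[OF E2]] by simp
  ultimately show ?thesis
    unfolding newton_differentiable_at_def by (rule Lim_null_comparison)
qed

lemma tendsto_diff_quotient_minus_deriv:
  fixes g g' :: "real \<Rightarrow> real"
  assumes g: "(g has_real_derivative g' b) (at b)" and g': "isCont g' b" and f: "(f \<longlongrightarrow> b) F"
  shows "((\<lambda>x. if f x = b then 0 else (g (f x) - g b) / (f x - b) - g' (f x)) \<longlongrightarrow> 0) F"
proof -
  define \<psi> where "\<psi> a = (if a = b then 0 else (g a - g b) / (a - b) - g' a)" for a
  have "((\<lambda>a. (g a - g b) / (a - b) - g' a) \<longlongrightarrow> g' b - g' b) (at b)"
    using g g' unfolding has_field_derivative_iff isCont_def by (intro tendsto_diff)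
  then have "((\<lambda>a. (g a - g b) / (a - b) - g' a) \<longlongrightarrow> 0) (at b)"
    by simp
  then have "(\<psi> \<longlongrightarrow> 0) (at b)"
    unfolding \<psi>_def by (rule tendsto_cong[THEN iffD1, rotated]) (simp_all add: eventually_at_filter)
  then have "isCont \<psi> b"
    by (simp add: isCont_def \<psi>_def)
  from isCont_tendsto_compose[OF this f] show ?thesis
    by (simp add: \<psi>_def)
qed

lemma newton_differentiable_at_compose_real:
  fixes \<phi> :: "'a::real_normed_vector \<Rightarrow> real"
  assumes \<phi>: "newton_differentiable_at \<phi> H\<phi> w"
    and lip: "eventually (\<lambda>h. dist (\<phi> (w + h)) (\<phi> w) \<le> C * norm h) (at 0)"
    and g: "(g has_real_derivative g' (\<phi> w)) (at (\<phi> w))" and g': "isCont g' (\<phi> w)"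
  shows "newton_differentiable_at (\<lambda>x. g (\<phi> x)) (\<lambda>x h. g' (\<phi> x) * H\<phi> x h) w"
proof -
  define b where "b = \<phi> w"
  define \<psi> where "\<psi> a = (if a = b then 0 else (g a - g b) / (a - b) - g' a)" for a
  have \<phi>_lim: "((\<lambda>h. \<phi> (w + h)) \<longlongrightarrow> b) (at 0)"
    unfolding b_def by (rule tendsto_at_zero_of_lipschitz_bound[OF lip])
  have \<psi>_lim: "((\<lambda>h. \<psi> (\<phi> (w + h))) \<longlongrightarrow> 0) (at 0)"
    unfolding \<psi>_def using g g' \<phi>_lim unfolding b_def by (rule tendsto_diff_quotient_minus_deriv)
  have g'_lim: "((\<lambda>h. g' (\<phi> (w + h))) \<longlongrightarrow> g' b) (at 0)"
    using g' \<phi>_lim unfolding b_def by (rule isCont_tendsto_compose)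
  have "eventually (\<lambda>h. norm (norm (g (\<phi> (w + h)) - g b - g' (\<phi> (w + h)) * H\<phi> (w + h) h) / norm h)
      \<le> \<bar>\<psi> (\<phi> (w + h))\<bar> * C
         + \<bar>g' (\<phi> (w + h))\<bar> * (norm (\<phi> (w + h) - b - H\<phi> (w + h) h) / norm h)) (at 0)"
    using lip unfolding eventually_at_filter
  proof eventually_elim
    case (elim h)
    let ?a = "\<phi> (w + h)" and ?t = "H\<phi> (w + h) h"
    have "g ?a - g b - g' ?a * ?t = \<psi> ?a * (?a - b) + g' ?a * (?a - b - ?t)"
      by (cases "?a = b") (simp_all add: \<psi>_def field_simps)
    then have "\<bar>g ?a - g b - g' ?a * ?t\<bar> \<le> \<bar>\<psi> ?a\<bar> * \<bar>?a - b\<bar> + \<bar>g' ?a\<bar> * \<bar>?a - b - ?t\<bar>"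
      by (metis abs_mult abs_triangle_ineq)
    also have "\<dots> \<le> \<bar>\<psi> ?a\<bar> * (C * norm h) + \<bar>g' ?a\<bar> * \<bar>?a - b - ?t\<bar>"
      using elim by (cases "h = 0") (simp_all add: b_def dist_real_def mult_left_mono)
    finally show ?case
      by (cases "h = 0") (simp_all add: divide_right_mono field_simps)
  qed
  moreover have "((\<lambda>h. \<bar>\<psi> (\<phi> (w + h))\<bar> * C
      + \<bar>g' (\<phi> (w + h))\<bar> * (norm (\<phi> (w + h) - b - H\<phi> (w + h) h) / norm h)) \<longlongrightarrow> 0) (at 0)"
    using tendsto_add[OF tendsto_mult_left_zero[OF tendsto_rabs_zero[OF \<psi>_lim]]
        tendsto_mult[OF tendsto_rabs[OF g'_lim] \<phi>[unfolded newton_differentiable_at_def]]]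
    by (simp add: b_def)
  ultimately show ?thesis
    unfolding newton_differentiable_at_def b_def by (rule Lim_null_comparison)
qed

text \<open>The cross term is \<open>O(\<parallel>h\<parallel>) \<cdot> o(1)\<close> once \<open>m\<close> is Lipschitz and \<open>F\<close> continuous at \<open>w\<close>.\<close>

lemma norm_scaleR_newton_remainder_le:
  fixes Fx Fw HFh :: "'b::real_normed_vector"
  shows "norm (mx *\<^sub>R Fx - mw *\<^sub>R Fw - (mx *\<^sub>R HFh + Hmh *\<^sub>R Fx))
    \<le> \<bar>mx\<bar> * norm (Fx - Fw - HFh) + \<bar>mx - mw - Hmh\<bar> * norm Fx + \<bar>mx - mw\<bar> * norm (Fx - Fw)"
proof -
  have "mx *\<^sub>R Fx - mw *\<^sub>R Fw - (mx *\<^sub>R HFh + Hmh *\<^sub>R Fx)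
      = mx *\<^sub>R (Fx - Fw - HFh) + (mx - mw - Hmh) *\<^sub>R Fx - (mx - mw) *\<^sub>R (Fx - Fw)"
    by (simp add: algebra_simps)
  then show ?thesis
    by (smt (verit) norm_scaleR norm_triangle_ineq norm_triangle_ineq4)
qed

lemma newton_differentiable_at_scaleR:
  fixes m :: "'a::real_normed_vector \<Rightarrow> real" and F :: "'a \<Rightarrow> 'b::real_normed_vector"
  assumes m: "newton_differentiable_at m Hm w"
    and lip: "eventually (\<lambda>h. dist (m (w + h)) (m w) \<le> C * norm h) (at 0)"
    and F: "newton_differentiable_at F HF w" and "isCont F w"
  shows "newton_differentiable_at (\<lambda>x. m x *\<^sub>R F x) (\<lambda>x h. m x *\<^sub>R HF x h + Hm x h *\<^sub>R F x) w"
proof -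
  let ?RF = "\<lambda>h. norm (F (w + h) - F w - HF (w + h) h) / norm h"
  let ?Rm = "\<lambda>h. \<bar>m (w + h) - m w - Hm (w + h) h\<bar> / norm h"
  have "eventually (\<lambda>h. norm (norm (m (w + h) *\<^sub>R F (w + h) - m w *\<^sub>R F w
        - (m (w + h) *\<^sub>R HF (w + h) h + Hm (w + h) h *\<^sub>R F (w + h))) / norm h)
      \<le> \<bar>m (w + h)\<bar> * ?RF h + ?Rm h * norm (F (w + h)) + C * norm (F (w + h) - F w)) (at 0)"
    using lip unfolding eventually_at_filter
  proof eventually_elim
    case (elim h)
    have "\<bar>m (w + h) - m w\<bar> * norm (F (w + h) - F w) \<le> (C * norm h) * norm (F (w + h) - F w)"
      using elim by (cases "h = 0") (simp_all add: dist_real_def mult_right_mono)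
    with norm_scaleR_newton_remainder_le[of "m (w + h)" "F (w + h)" "m w" "F w" "HF (w + h) h" "Hm (w + h) h"]
    have "norm (m (w + h) *\<^sub>R F (w + h) - m w *\<^sub>R F w
        - (m (w + h) *\<^sub>R HF (w + h) h + Hm (w + h) h *\<^sub>R F (w + h)))
      \<le> \<bar>m (w + h)\<bar> * norm (F (w + h) - F w - HF (w + h) h)
        + \<bar>m (w + h) - m w - Hm (w + h) h\<bar> * norm (F (w + h)) + (C * norm h) * norm (F (w + h) - F w)"
      by linarith
    then show ?case
      by (cases "h = 0") (simp_all add: divide_right_mono field_simps)
  qed
  moreover have "((\<lambda>h. \<bar>m (w + h)\<bar> * ?RF h + ?Rm h * norm (F (w + h))
      + C * norm (F (w + h) - F w)) \<longlongrightarrow> 0) (at 0)"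
  proof -
    have m_lim: "((\<lambda>h. m (w + h)) \<longlongrightarrow> m w) (at 0)"
      by (rule tendsto_at_zero_of_lipschitz_bound[OF lip])
    have F_lim: "((\<lambda>h. F (w + h)) \<longlongrightarrow> F w) (at 0)"
      using \<open>isCont F w\<close> unfolding isCont_def by (rule LIM_offset_zero)
    have RF: "(?RF \<longlongrightarrow> 0) (at 0)" and Rm: "(?Rm \<longlongrightarrow> 0) (at 0)"
      using F m unfolding newton_differentiable_at_def by simp_all
    show ?thesis
      using tendsto_add[OF tendsto_add[OF tendsto_mult[OF tendsto_rabs[OF m_lim] RF]
          tendsto_mult[OF Rm tendsto_norm[OF F_lim]]]
        tendsto_mult[OF tendsto_const[of C] tendsto_norm[OF tendsto_diff[OF F_lim tendsto_const[of "F w"]]]]]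
      by simp
  qed
  ultimately show ?thesis
    unfolding newton_differentiable_at_def by (rule Lim_null_comparison)
qed

lemma lipschitz_on_scaleR:
  fixes m :: "'a::metric_space \<Rightarrow> real" and F :: "'a \<Rightarrow> 'b::real_normed_vector"
  assumes m: "C-lipschitz_on U m" and F: "L-lipschitz_on U F"
    and m_bound: "\<And>x. x \<in> U \<Longrightarrow> \<bar>m x\<bar> \<le> M" and F_bound: "\<And>x. x \<in> U \<Longrightarrow> norm (F x) \<le> B"
    and "0 \<le> M" "0 \<le> B"
  shows "(M * L + C * B)-lipschitz_on U (\<lambda>x. m x *\<^sub>R F x)"
proof (rule lipschitz_onI)
  fix x y assume x: "x \<in> U" and y: "y \<in> U"
  have "m x *\<^sub>R F x - m y *\<^sub>R F y = m x *\<^sub>R (F x - F y) + (m x - m y) *\<^sub>R F y"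
    by (simp add: algebra_simps)
  then have "dist (m x *\<^sub>R F x) (m y *\<^sub>R F y) \<le> \<bar>m x\<bar> * dist (F x) (F y) + dist (m x) (m y) * norm (F y)"
    by (metis dist_norm dist_real_def norm_scaleR norm_triangle_ineq)
  also have "\<dots> \<le> M * (L * dist x y) + (C * dist x y) * B"
    using x y m_bound F_bound lipschitz_onD[OF m x y] lipschitz_onD[OF F x y]
      lipschitz_on_nonneg[OF m] lipschitz_on_nonneg[OF F] \<open>0 \<le> M\<close>
    by (intro add_mono mult_mono) auto
  finally show "dist (m x *\<^sub>R F x) (m y *\<^sub>R F y) \<le> (M * L + C * B) * dist x y"
    by (simp add: algebra_simps)
qed (use assms lipschitz_on_nonneg[OF m] lipschitz_on_nonneg[OF F] in simp)

lemma lipschitz_on_norm_le: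
  fixes f :: "'a::metric_space \<Rightarrow> 'b::real_normed_vector"
  assumes "C-lipschitz_on U f" "x \<in> U" "z \<in> U" "dist x z \<le> \<delta>"
  shows "norm (f x) \<le> norm (f z) + C * \<delta>"
proof -
  have "norm (f x) \<le> norm (f z) + dist (f x) (f z)"
    by (metis dist_norm norm_triangle_sub add.commute)
  also have "dist (f x) (f z) \<le> C * \<delta>"
    using lipschitz_onD[OF assms(1-3)] assms(4) lipschitz_on_nonneg[OF assms(1)]
    by (meson mult_left_mono order_trans)
  finally show ?thesis by simp
qed

lemma semismooth_with_scaleR:
  fixes m :: "'a::real_normed_vector \<Rightarrow> real" and F :: "'a \<Rightarrow> 'b::real_normed_vector"
  assumes "semismooth_with D m Hm z" "semismooth_with D F HF z"
  shows "semismooth_with D (\<lambda>x. m x *\<^sub>R F x) (\<lambda>x h. m x *\<^sub>R HF x h + Hm x h *\<^sub>R F x) z"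
proof -
  obtain Um Cm Nm where Um: "open Um" "z \<in> Um" "Um \<subseteq> D" and m_lip: "Cm-lipschitz_on Um m"
    and Hm: "\<forall>w\<in>D. bounded_linear (Hm w)"
    and Nm: "open Nm" "z \<in> Nm" "Nm \<subseteq> D" "\<forall>w\<in>Nm. newton_differentiable_at m Hm w"
    using assms(1) unfolding semismooth_with_iff by blast
  obtain UF CF NF where UF: "open UF" "z \<in> UF" "UF \<subseteq> D" and F_lip: "CF-lipschitz_on UF F"
    and HF: "\<forall>w\<in>D. bounded_linear (HF w)"
    and NF: "open NF" "z \<in> NF" "NF \<subseteq> D" "\<forall>w\<in>NF. newton_differentiable_at F HF w"
    using assms(2) unfolding semismooth_with_iff by blast
  define U where "U = Um \<inter> UF \<inter> ball z 1"
  have U: "open U" "z \<in> U" "U \<subseteq> D"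
    using Um UF by (auto simp: U_def)
  have "((\<bar>m z\<bar> + Cm) * CF + Cm * (norm (F z) + CF))-lipschitz_on U (\<lambda>x. m x *\<^sub>R F x)"
  proof (rule lipschitz_on_scaleR)
    show "Cm-lipschitz_on U m" "CF-lipschitz_on U F"
      using m_lip F_lip by (auto simp: U_def intro: lipschitz_on_subset)
    show "\<bar>m x\<bar> \<le> \<bar>m z\<bar> + Cm" "norm (F x) \<le> norm (F z) + CF" if "x \<in> U" for x
      using that Um UF lipschitz_on_norm_le[OF m_lip, of x z 1] lipschitz_on_norm_le[OF F_lip, of x z 1]
      by (auto simp: U_def dist_commute)
    show "0 \<le> \<bar>m z\<bar> + Cm" "0 \<le> norm (F z) + CF"
      using lipschitz_on_nonneg[OF m_lip] lipschitz_on_nonneg[OF F_lip] by auto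
  qed
  moreover have "bounded_linear (\<lambda>h. m w *\<^sub>R HF w h + Hm w h *\<^sub>R F w)" if "w \<in> D" for w
    using that Hm HF
    by (intro bounded_linear_add bounded_linear_compose[OF bounded_linear_scaleR_right]
        bounded_linear_scaleR_const) auto
  moreover have "newton_differentiable_at (\<lambda>x. m x *\<^sub>R F x) (\<lambda>x h. m x *\<^sub>R HF x h + Hm x h *\<^sub>R F x) w"
    if "w \<in> Nm \<inter> NF \<inter> Um \<inter> UF" for w
  proof (rule newton_differentiable_at_scaleR)
    show "eventually (\<lambda>h. dist (m (w + h)) (m w) \<le> Cm * norm h) (at 0)"
      using m_lip Um(1) that by (intro lipschitz_on_eventually_at_zero) auto
    show "isCont F w"
      using lipschitz_on_continuous_on[OF F_lip] UF(1) that
      by (simp add: continuous_on_eq_continuous_at)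
  qed (use that Nm NF in auto)
  moreover have "open (Nm \<inter> NF \<inter> Um \<inter> UF)" "z \<in> Nm \<inter> NF \<inter> Um \<inter> UF" "Nm \<inter> NF \<inter> Um \<inter> UF \<subseteq> D"
    using Nm NF Um UF by auto
  ultimately show ?thesis
    unfolding semismooth_with_iff using U by blast
qed

lemma lipschitz_on_cball_of_continuous_deriv:
  fixes g g' :: "real \<Rightarrow> real"
  assumes T: "cball b \<epsilon> \<subseteq> T" and g: "\<And>t. t \<in> T \<Longrightarrow> (g has_real_derivative g' t) (at t)"
    and g': "continuous_on T g'"
  obtains B where "B-lipschitz_on (cball b \<epsilon>) g"
proof -
  have "compact (g' ` cball b \<epsilon>)"
    using T by (intro compact_continuous_image continuous_on_subset[OF g']) auto
  then obtain B where "\<forall>y\<in>g' ` cball b \<epsilon>. norm y \<le> B"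
    by (meson bounded_iff compact_imp_bounded)
  then have B: "\<And>t. t \<in> cball b \<epsilon> \<Longrightarrow> \<bar>g' t\<bar> \<le> max B 0"
    by (metis image_eqI max.coboundedI1 real_norm_def)
  have "(max B 0)-lipschitz_on (cball b \<epsilon>) g"
  proof (rule bounded_derivative_imp_lipschitz[where f' = "\<lambda>t h. g' t * h"])
    show "(g has_derivative (\<lambda>h. g' t * h)) (at t within cball b \<epsilon>)" if "t \<in> cball b \<epsilon>" for t
      using g[of t] T that unfolding has_field_derivative_def by (blast intro: has_derivative_at_withinI)
    show "onorm (\<lambda>h. g' t * h) \<le> max B 0" if "t \<in> cball b \<epsilon>" for t
      using B[OF that] by (intro onorm_le) (simp add: abs_mult mult_right_mono)
  qed auto
  then show ?thesis
    by (rule that)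
qed

lemma semismooth_with_compose_real:
  fixes \<phi> :: "'a::real_normed_vector \<Rightarrow> real"
  assumes \<phi>: "semismooth_with D \<phi> H\<phi> z" and T: "open T" "\<phi> z \<in> T"
    and g: "\<And>t. t \<in> T \<Longrightarrow> (g has_real_derivative g' t) (at t)" and g': "continuous_on T g'"
  shows "semismooth_with D (\<lambda>x. g (\<phi> x)) (\<lambda>x h. g' (\<phi> x) * H\<phi> x h) z"
proof -
  obtain U C N where U: "open U" "z \<in> U" "U \<subseteq> D" and \<phi>_lip: "C-lipschitz_on U \<phi>"
    and H\<phi>: "\<forall>w\<in>D. bounded_linear (H\<phi> w)"
    and N: "open N" "z \<in> N" "N \<subseteq> D" "\<forall>w\<in>N. newton_differentiable_at \<phi> H\<phi> w"
    using \<phi> unfolding semismooth_with_iff by blast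
  obtain \<epsilon> where "\<epsilon> > 0" and \<epsilon>: "cball (\<phi> z) \<epsilon> \<subseteq> T"
    using T open_contains_cball by blast
  obtain B where g_lip: "B-lipschitz_on (cball (\<phi> z) \<epsilon>) g"
    using lipschitz_on_cball_of_continuous_deriv[OF \<epsilon> g g'] by blast
  define V where "V = U \<inter> \<phi> -` ball (\<phi> z) \<epsilon>"
  have V: "open V" "z \<in> V" "V \<subseteq> D"
    using continuous_open_preimage[OF lipschitz_on_continuous_on[OF \<phi>_lip] U(1) open_ball] U \<open>\<epsilon> > 0\<close>
    by (auto simp: V_def)
  have "(B * C)-lipschitz_on V (\<lambda>x. g (\<phi> x))"
    using \<phi>_lip g_lip
    by (intro lipschitz_on_compose2) (auto simp: V_def intro: lipschitz_on_subset)
  moreover have "bounded_linear (\<lambda>h. g' (\<phi> w) * H\<phi> w h)" if "w \<in> D" for w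
    using that H\<phi> by (auto intro: bounded_linear_compose[OF bounded_linear_mult_right])
  moreover have "newton_differentiable_at (\<lambda>x. g (\<phi> x)) (\<lambda>x h. g' (\<phi> x) * H\<phi> x h) w"
    if w: "w \<in> N \<inter> V" for w
  proof (rule newton_differentiable_at_compose_real)
    show "eventually (\<lambda>h. dist (\<phi> (w + h)) (\<phi> w) \<le> C * norm h) (at 0)"
      using \<phi>_lip U(1) w by (intro lipschitz_on_eventually_at_zero) (auto simp: V_def)
    have "\<phi> w \<in> T"
      using w \<epsilon> by (auto simp: V_def)
    then show "(g has_real_derivative g' (\<phi> w)) (at (\<phi> w))" "isCont g' (\<phi> w)"
      using g g' T(1) by (auto simp: continuous_on_eq_continuous_at)
  qed (use w N in auto)
  moreover have "open (N \<inter> V)" "z \<in> N \<inter> V" "N \<inter> V \<subseteq> D"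
    using N V by auto
  ultimately show ?thesis
    unfolding semismooth_with_iff using V by blast
qed

lemma semismooth_with_norm_translate:
  fixes r z :: "'a::real_normed_vector"
  assumes Nd: "\<And>x. x \<noteq> 0 \<Longrightarrow> (norm has_derivative Nd x) (at x)"
    and "open D" "z \<in> D" "z \<noteq> r"
  shows "semismooth_with D (\<lambda>x. norm (x - r)) (\<lambda>x h. if x = r then 0 else Nd (x - r) h) z"
proof -
  have "1-lipschitz_on D (\<lambda>x. norm (x - r))"
  proof (rule lipschitz_onI)
    show "dist (norm (x - r)) (norm (y - r)) \<le> 1 * dist x y" for x y
      using norm_triangle_ineq3[of "x - r" "y - r"] by (simp add: dist_norm)
  qed simp
  moreover have "bounded_linear (\<lambda>h. if w = r then 0 else Nd (w - r) h)" for w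
    using Nd[of "w - r"] by (cases "w = r") (auto intro: has_derivative_bounded_linear bounded_linear_zero)
  moreover have "newton_differentiable_at (\<lambda>x. norm (x - r)) (\<lambda>x h. if x = r then 0 else Nd (x - r) h) w"
    if "w \<noteq> r" for w
  proof -
    have shift: "w - r + h = w + h - r" for h
      by (simp add: algebra_simps)
    have "newton_differentiable_at norm Nd (w - r)"
      using Nd that by (intro newton_differentiable_at_norm) auto
    moreover have "eventually (\<lambda>h. w - r + h \<in> - {0}) (at 0)"
      using that by (intro eventually_at_zero_add_in_open) auto
    then have "eventually (\<lambda>h. (if w - r + h = 0 then 0 else Nd (w - r + h) h) = Nd (w - r + h) h) (at 0)"
      by eventually_elim simp
    ultimately have "newton_differentiable_at norm (\<lambda>y h. if y = 0 then 0 else Nd y h) (w - r)"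
      by (rule newton_differentiable_at_cong)
    then show ?thesis
      unfolding newton_differentiable_at_def shift by simp
  qed
  moreover have "open (D - {r})" "z \<in> D - {r}"
    using assms(2-4) by auto
  ultimately show ?thesis
    unfolding semismooth_with_iff using assms(2,3) by blast
qed

lemma semismooth_with_cong_open:
  assumes "semismooth_with D F H z" "open S" "z \<in> S"
    and "\<And>w. w \<in> S \<Longrightarrow> H' w = H w" and "\<And>w. w \<in> D - S \<Longrightarrow> bounded_linear (H' w)"
  shows "semismooth_with D F H' z"
proof -
  obtain N where N: "open N" "z \<in> N" "N \<subseteq> D" "\<forall>w\<in>N. newton_differentiable_at F H w"
    and H: "\<forall>w\<in>D. bounded_linear (H w)"
    using assms(1) unfolding semismooth_with_iff by blast
  have "newton_differentiable_at F H' w" if "w \<in> N \<inter> S" for w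
  proof (rule newton_differentiable_at_cong)
    show "newton_differentiable_at F H w"
      using N(4) that by blast
    show "eventually (\<lambda>h. H' (w + h) h = H (w + h) h) (at 0)"
      using eventually_at_zero_add_in_open[OF assms(2), of w] \<open>w \<in> N \<inter> S\<close>
      by (auto elim!: eventually_mono simp: assms(4))
  qed
  moreover have "open (N \<inter> S)" "z \<in> N \<inter> S" "N \<inter> S \<subseteq> D"
    using N assms(2,3) by auto
  moreover have "bounded_linear (H' w)" if "w \<in> D" for w
    using that H assms(4,5) by (cases "w \<in> S") auto
  ultimately show ?thesis
    using assms(1) unfolding semismooth_with_iff by blast
qed

theorem mainTheorem2:
  fixes D :: "'a::banach set" and F :: "'a \<Rightarrow> 'b::banach"
    and HF :: "'a \<Rightarrow> 'a \<Rightarrow> 'b" and Nd :: "'a \<Rightarrow> 'a \<Rightarrow> real"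
    and z r :: 'a and p \<sigma> :: real
  assumes norm_diff: "\<And>x. x \<noteq> 0 \<Longrightarrow> (norm has_derivative Nd x) (at x)"
    and "open D"
    and "z \<in> D" and "z \<noteq> r"
    and "semismooth_with D F HF z"
    and "p \<ge> 1" and "\<sigma> \<ge> 0"
  shows "semismooth_with D
           (\<lambda>w. (1 / norm (w - r) powr p + \<sigma>) *\<^sub>R F w)
           (\<lambda>w h. if w = r then 0 else
                 (\<sigma> + 1 / norm (w - r) powr p) *\<^sub>R HF w h
                 - (p * Nd (w - r) h / norm (w - r) powr (p + 1)) *\<^sub>R F w)
           z"
proof -
  define g' where "g' t = - p / t powr (p + 1)" for t :: real
  have "semismooth_with D (\<lambda>w. norm (w - r)) (\<lambda>w h. if w = r then 0 else Nd (w - r) h) z"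
    using norm_diff \<open>open D\<close> \<open>z \<in> D\<close> \<open>z \<noteq> r\<close> by (rule semismooth_with_norm_translate)
  then have "semismooth_with D (\<lambda>w. 1 / norm (w - r) powr p + \<sigma>)
      (\<lambda>w h. g' (norm (w - r)) * (if w = r then 0 else Nd (w - r) h)) z"
  proof (rule semismooth_with_compose_real)
    show "((\<lambda>t. 1 / t powr p + \<sigma>) has_real_derivative g' t) (at t)" if "t \<in> {0<..}" for t
    proof -
      have "t powr p * t powr p = t powr (p + 1) * t powr (p - 1)"
        by (simp add: powr_add [symmetric])
      with that show ?thesis
        unfolding g'_def by (auto intro!: derivative_eq_intros simp: field_simps)
    qed
    show "continuous_on {0<..} g'"
      unfolding g'_def by (intro continuous_intros) auto
  qed (use \<open>z \<noteq> r\<close> in auto)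
  from semismooth_with_scaleR[OF this \<open>semismooth_with D F HF z\<close>]
  show ?thesis
    by (rule semismooth_with_cong_open[where S = "- {r}"]) (use \<open>z \<noteq> r\<close> in \<open>auto simp: g'_def algebra_simps\<close>)
qed

end
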